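(* Let $M$ be a compact metric space and $C(M)$ the algebra of continuous functions on $M$. Let $f\star_t g=fg+\sum_{k\ge1}c_k(f,g)t^k$ be a formal deformation of $C(M)$ (an associative product on $C(M)[[t]]$, extended $t$-bilinearly) such that each coefficient $c_k$ is continuous, i.e. extends to a continuous linear map $C(M\times M)\to C(M)$. Then $\star_t$ is equivalent to the trivial deformation: there is a formal series $T=\mathrm{Id}+\sum_{k\ge1}T_kt^k$ of continuous linear maps $T_k:C(M)\to C(M)$ with $T(f)\star_t T(g)=T(fg)$ for all $f,g\in C(M)$. *)

theory Defs
  imports "HOL-Analysis.Analysis"
begin

text \<open>Pointwise product in C(M), realised as bounded continuous real functions
  (on a compact space every continuous function is bounded).\<close>
definition bc_mult :: "('a::topological_space \<Rightarrow>\<^sub>C real) \<Rightarrow> ('a \<Rightarrow>\<^sub>C real) \<Rightarrow> ('a \<Rightarrow>\<^sub>C real)"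
  where "bc_mult f g = Bcontfun (\<lambda>x. apply_bcontfun f x * apply_bcontfun g x)"

definition bc_tensor :: "('a::topological_space \<Rightarrow>\<^sub>C real) \<Rightarrow> ('a \<Rightarrow>\<^sub>C real) \<Rightarrow> (('a \<times> 'a) \<Rightarrow>\<^sub>C real)"
  where "bc_tensor f g = Bcontfun (\<lambda>p. apply_bcontfun f (fst p) * apply_bcontfun g (snd p))"

text \<open>Formal power series with coefficients in C(M) are sequences nat \<Rightarrow> C(M).
  Given the cochains c k (with c 0 = pointwise product), the t-bilinear extension
  of the star product to C(M)[[t]] is
  (F \<star> G)_n = \<Sum>_{i+j+l=n} c_i(F_j, G_l).\<close>
definition fstar ::
  "(nat \<Rightarrow> ('a::topological_space \<Rightarrow>\<^sub>C real) \<Rightarrow> ('a \<Rightarrow>\<^sub>C real) \<Rightarrow> ('a \<Rightarrow>\<^sub>C real))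
   \<Rightarrow> (nat \<Rightarrow> ('a \<Rightarrow>\<^sub>C real)) \<Rightarrow> (nat \<Rightarrow> ('a \<Rightarrow>\<^sub>C real)) \<Rightarrow> (nat \<Rightarrow> ('a \<Rightarrow>\<^sub>C real))"
  where "fstar c F G n = (\<Sum>i\<le>n. \<Sum>j\<le>n - i. c i (F j) (G (n - i - j)))"

end

theory Submission
  imports Defs
begin

text \<open>Work degree by degree. If T 0 = id, T 1, ..., T n make T f \<star> T g = T (f g) hold in all
  degrees up to n, then by associativity the defect R in degree n + 1 (computed with T (n + 1) = 0)
  is a bounded Hochschild 2-cocycle of C(M) with values in C(M), and T (n + 1) = -S removes it for
  any bounded S with R = \<delta>S.

  So everything rests on the vanishing of bounded Hochschild cohomology in degree 2. A bounded
  cocycle c is local: c w g x is small when w vanishes at x and is supported where g hardly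
  oscillates. Hence S g x = lim c \<phi> g x, over tents \<phi> at x shrinking to x, exists and is
  continuous in x, and the cocycle identity at (\<phi>, f, g) yields c = \<delta>S.\<close>

lemma bounded_bilinear_zero: "bounded_bilinear (\<lambda>x y. 0)"
  by (rule bounded_bilinear.intro) (auto intro: exI[of _ 0])

lemma bounded_bilinear_add:
  assumes "bounded_bilinear f" and "bounded_bilinear g"
  shows "bounded_bilinear (\<lambda>x y. f x y + g x y)"
proof -
  interpret f: bounded_bilinear f by fact
  interpret g: bounded_bilinear g by fact
  obtain Kf where Kf: "\<And>x y. norm (f x y) \<le> norm x * norm y * Kf" using f.bounded by blast
  obtain Kg where Kg: "\<And>x y. norm (g x y) \<le> norm x * norm y * Kg" using g.bounded by blast
  show ?thesis
  proof (rule bounded_bilinear.intro)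
    show "\<exists>K. \<forall>x y. norm (f x y + g x y) \<le> norm x * norm y * K"
    proof (intro exI allI)
      fix x y
      have "norm (f x y + g x y) \<le> norm x * norm y * Kf + norm x * norm y * Kg"
        using norm_triangle_ineq[of "f x y" "g x y"] Kf[of x y] Kg[of x y] by linarith
      then show "norm (f x y + g x y) \<le> norm x * norm y * (Kf + Kg)"
        by (simp add: algebra_simps)
    qed
  qed (simp_all add: f.add_left f.add_right f.scaleR_left f.scaleR_right
         g.add_left g.add_right g.scaleR_left g.scaleR_right algebra_simps scaleR_add_right)
qed

lemma bounded_bilinear_sum:
  "(\<And>i. i \<in> A \<Longrightarrow> bounded_bilinear (f i)) \<Longrightarrow> bounded_bilinear (\<lambda>x y. \<Sum>i\<in>A. f i x y)"
  by (induction A rule: infinite_finite_induct) (auto intro: bounded_bilinear_add bounded_bilinear_zero)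

lemma bounded_linear_compose_bilinear:
  assumes "bounded_linear L" and "bounded_bilinear b"
  shows "bounded_bilinear (\<lambda>x y. L (b x y))"
proof -
  interpret L: bounded_linear L by fact
  interpret b: bounded_bilinear b by fact
  obtain KL where KL: "KL \<ge> 0" "\<And>x. norm (L x) \<le> norm x * KL" using L.nonneg_bounded by blast
  obtain Kb where Kb: "\<And>x y. norm (b x y) \<le> norm x * norm y * Kb" using b.bounded by blast
  show ?thesis
  proof (rule bounded_bilinear.intro)
    show "\<exists>K. \<forall>x y. norm (L (b x y)) \<le> norm x * norm y * K"
    proof (intro exI allI)
      fix x y
      have "norm (L (b x y)) \<le> norm x * norm y * Kb * KL"
        using KL(2)[of "b x y"] Kb[of x y] mult_right_mono[OF Kb[of x y] KL(1)] by linarith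
      then show "norm (L (b x y)) \<le> norm x * norm y * (Kb * KL)" by (simp add: ac_simps)
    qed
  qed (simp_all add: b.add_left b.add_right b.scaleR_left b.scaleR_right L.add L.scaleR)
qed

type_synonym 'a cfun = "'a \<Rightarrow>\<^sub>C real"

lemma bc_mult_apply [simp]: "bc_mult f g x = f x * g x"
  for f g :: "'a::topological_space cfun"
proof -
  have "(\<lambda>x. f x * g x) \<in> bcontfun"
  proof (rule bcontfun_normI)
    show "continuous_on UNIV (\<lambda>x. f x * g x)"
      by (intro continuous_intros continuous_on_apply_bcontfun)
    show "norm (f x * g x) \<le> norm f * norm g" for x
      using norm_bounded[of f x] norm_bounded[of g x] by (simp add: abs_mult mult_mono')
  qed
  then show ?thesis by (simp add: bc_mult_def Bcontfun_inverse)
qed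

lemma bounded_bilinear_bc_mult: "bounded_bilinear (bc_mult :: 'a::topological_space cfun \<Rightarrow> _)"
proof (rule bounded_bilinear.intro)
  have "norm (bc_mult f g) \<le> norm f * norm g" for f g :: "'a cfun"
    by (rule norm_bound)
      (simp add: abs_mult mult_mono' norm_bounded[of f, simplified] norm_bounded[of g, simplified])
  then show "\<exists>K. \<forall>f g :: 'a cfun. norm (bc_mult f g) \<le> norm f * norm g * K"
    by (intro exI[of _ 1]) simp
qed (auto intro!: bcontfun_eqI simp: algebra_simps)

lemma bc_tensor_apply [simp]: "bc_tensor f g p = f (fst p) * g (snd p)"
  for f g :: "'a::topological_space cfun"
proof -
  have "(\<lambda>p. f (fst p) * g (snd p)) \<in> bcontfun"
  proof (rule bcontfun_normI)
    show "continuous_on UNIV (\<lambda>p::'a \<times> 'a. f (fst p) * g (snd p))"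
      by (intro continuous_intros continuous_on_compose2[OF continuous_on_apply_bcontfun]) auto
    show "norm (f (fst p) * g (snd p)) \<le> norm f * norm g" for p :: "'a \<times> 'a"
      using norm_bounded[of f "fst p"] norm_bounded[of g "snd p"] by (simp add: abs_mult mult_mono')
  qed
  then show ?thesis by (simp add: bc_tensor_def Bcontfun_inverse)
qed

lemma bounded_bilinear_bc_tensor: "bounded_bilinear (bc_tensor :: 'a::topological_space cfun \<Rightarrow> _)"
proof (rule bounded_bilinear.intro)
  have "norm (bc_tensor f g) \<le> norm f * norm g" for f g :: "'a cfun"
    by (rule norm_bound)
      (simp add: abs_mult mult_mono' norm_bounded[of f, simplified] norm_bounded[of g, simplified])
  then show "\<exists>K. \<forall>f g :: 'a cfun. norm (bc_tensor f g) \<le> norm f * norm g * K"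
    by (intro exI[of _ 1]) simp
qed (auto intro!: bcontfun_eqI simp: algebra_simps)

section \<open>Bounded Hochschild 2-cocycles are coboundaries\<close>

definition bump :: "'a::metric_space \<Rightarrow> real \<Rightarrow> real \<Rightarrow> 'a cfun"
  where "bump x s r = Bcontfun (\<lambda>y. min 1 (max 0 (s - dist y x / r)))"

lemma bump_apply [simp]: "bump x s r y = min 1 (max 0 (s - dist y x / r))"
proof -
  have "(\<lambda>y. min 1 (max 0 (s - dist y x / r))) \<in> bcontfun"
    unfolding divide_inverse by (rule bcontfun_normI[where b=1]) (auto intro!: continuous_intros)
  then show ?thesis by (simp add: bump_def Bcontfun_inverse)
qed

lemma bump_nonneg: "0 \<le> bump x s r y"
  and bump_le_1: "bump x s r y \<le> 1"
  by simp_all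

lemma norm_bump_le: "norm (bump x s r) \<le> 1"
  by (rule norm_bound) simp

lemma bump_eq_0:
  assumes "0 < r" and "s * r \<le> dist y x"
  shows "bump x s r y = 0"
proof -
  have "s - dist y x / r \<le> 0" using assms by (simp add: field_simps)
  then show ?thesis by simp
qed

lemma bump_2_eq_1: "0 < r \<Longrightarrow> dist y x \<le> r \<Longrightarrow> bump x 2 r y = 1"
  by (simp add: field_simps)

lemma bcontfun_near:
  fixes g :: "'a::metric_space cfun"
  assumes "0 < e"
  shows "\<exists>d>0. \<forall>y. dist y x < d \<longrightarrow> \<bar>g y - g x\<bar> < e"
  using continuous_on_apply_bcontfun[of UNIV g] assms
  unfolding continuous_on_iff dist_real_def by blast

lemma isCont_apply_bcontfun: "isCont (apply_bcontfun f) x"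
  using continuous_on_eq_continuous_at[OF open_UNIV, of "apply_bcontfun f"] by simp

definition hochschild_cocycle :: "('a::topological_space cfun \<Rightarrow> 'a cfun \<Rightarrow> 'a cfun) \<Rightarrow> bool"
  where "hochschild_cocycle c \<longleftrightarrow>
    (\<forall>f g h. c (bc_mult f g) h + bc_mult (c f g) h = c f (bc_mult g h) + bc_mult f (c g h))"

definition hochschild_coboundary ::
    "('a::topological_space cfun \<Rightarrow> 'a cfun) \<Rightarrow> 'a cfun \<Rightarrow> 'a cfun \<Rightarrow> 'a cfun"
  where "hochschild_coboundary S f g = bc_mult f (S g) - S (bc_mult f g) + bc_mult (S f) g"

definition probe :: "('a::metric_space cfun \<Rightarrow> 'a cfun \<Rightarrow> 'a cfun) \<Rightarrow> 'a cfun \<Rightarrow> 'a \<Rightarrow> nat \<Rightarrow> real"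
  where "probe c g x n = c (bump x 1 (inverse (real (Suc n)))) g x"

definition potential :: "('a::metric_space cfun \<Rightarrow> 'a cfun \<Rightarrow> 'a cfun) \<Rightarrow> 'a cfun \<Rightarrow> 'a \<Rightarrow> real"
  where "potential c g x = lim (probe c g x)"

context
  fixes c :: "'a::metric_space cfun \<Rightarrow> 'a cfun \<Rightarrow> 'a cfun"
    and K :: real
  assumes bilinear: "bounded_bilinear c"
    and K_pos: "0 < K"
    and K_bound: "\<And>f g. norm (c f g) \<le> norm f * norm g * K"
    and cocycle: "hochschild_cocycle c"
begin

interpretation c: bounded_bilinear c by (rule bilinear)

lemma cocycle_apply: "c (bc_mult f g) h x + c f g x * h x = c f (bc_mult g h) x + f x * c g h x"
proof -
  have "c (bc_mult f g) h + bc_mult (c f g) h = c f (bc_mult g h) + bc_mult f (c g h)"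
    using cocycle by (simp add: hochschild_cocycle_def)
  then show ?thesis by (metis bc_mult_apply plus_bcontfun.rep_eq)
qed

lemma cocycle_apply_bound: "\<bar>c f g x\<bar> \<le> norm f * norm g * K"
  using norm_bounded[of "c f g" x] K_bound[of f g] by simp

text \<open>Since w \<theta> = w for the plateau \<theta> and w x = 0, the cocycle identity at (w, \<theta>, g) gives
  c w g x = c w (\<theta> g - g x \<theta>) x, and \<theta> g - g x \<theta> is small.\<close>
lemma cocycle_local_bound:
  fixes w g :: "'a cfun"
  assumes w0: "w x = 0" and wW: "\<And>y. \<bar>w y\<bar> \<le> W"
    and wR: "\<And>y. R \<le> dist y x \<Longrightarrow> w y = 0" and R: "0 < R"
    and g_osc: "\<And>y. dist y x < 2 * R \<Longrightarrow> \<bar>g y - g x\<bar> \<le> \<epsilon>"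
  shows "\<bar>c w g x\<bar> \<le> W * \<epsilon> * K"
proof -
  define \<theta> where "\<theta> = bump x 2 R"
  have w\<theta>: "bc_mult w \<theta> = w"
    by (rule bcontfun_eqI) (use wR bump_2_eq_1[OF R] in \<open>force simp: \<theta>_def\<close>)
  have "c w g x = c w (bc_mult \<theta> g) x - c w \<theta> x * g x"
    using cocycle_apply[of w \<theta> g x] w0 w\<theta> by simp
  also have "\<dots> = c w (bc_mult \<theta> g - g x *\<^sub>R \<theta>) x"
    by (simp add: c.diff_right c.scaleR_right)
  finally have eq: "c w g x = c w (bc_mult \<theta> g - g x *\<^sub>R \<theta>) x" .
  have \<epsilon>: "0 \<le> \<epsilon>" using g_osc[of x] R by simp
  have "norm (bc_mult \<theta> g - g x *\<^sub>R \<theta>) \<le> \<epsilon>"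
  proof (rule norm_bound)
    fix y
    have "\<bar>\<theta> y * (g y - g x)\<bar> \<le> \<epsilon>"
    proof (cases "dist y x < 2 * R")
      case True
      have "\<bar>\<theta> y\<bar> * \<bar>g y - g x\<bar> \<le> 1 * \<epsilon>"
        using g_osc[OF True] \<epsilon> by (intro mult_mono) (auto simp: \<theta>_def)
      then show ?thesis by (simp add: abs_mult)
    next
      case False
      then show ?thesis using bump_eq_0[OF R, of 2 y x] \<epsilon> by (simp add: \<theta>_def)
    qed
    then show "norm ((bc_mult \<theta> g - g x *\<^sub>R \<theta>) y) \<le> \<epsilon>" by (simp add: algebra_simps)
  qed
  moreover have "norm w \<le> W" by (rule norm_bound) (simp add: wW)
  ultimately have "norm w * norm (bc_mult \<theta> g - g x *\<^sub>R \<theta>) * K \<le> W * \<epsilon> * K"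
    using K_pos \<epsilon> order_trans[OF abs_ge_zero wW] by (intro mult_right_mono mult_mono) auto
  then show ?thesis using eq cocycle_apply_bound[of w "bc_mult \<theta> g - g x *\<^sub>R \<theta>" x] by linarith
qed

lemma convergent_probe: "convergent (probe c g x)"
proof -
  have "Cauchy (probe c g x)"
  proof (rule metric_CauchyI)
    fix e :: real assume "0 < e"
    define \<epsilon> where "\<epsilon> = e / (2 * K)"
    have "0 < \<epsilon>" using \<open>0 < e\<close> K_pos by (simp add: \<epsilon>_def)
    then obtain d where d: "0 < d" "\<And>y. dist y x < d \<Longrightarrow> \<bar>g y - g x\<bar> < \<epsilon>"
      using bcontfun_near by blast
    then obtain N where N: "\<And>n. N \<le> n \<Longrightarrow> inverse (real (Suc n)) < d / 2"
      using order_tendstoD(2)[OF LIMSEQ_inverse_real_of_nat, of "d / 2"]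
      by (auto simp: eventually_sequentially)
    have "dist (probe c g x m) (probe c g x n) < e" if "N \<le> m" "N \<le> n" for m n
    proof -
      define w where "w = bump x 1 (inverse (real (Suc m))) - bump x 1 (inverse (real (Suc n)))"
      have "\<bar>c w g x\<bar> \<le> 1 * \<epsilon> * K"
      proof (rule cocycle_local_bound[where R = "d / 2"])
        show "w x = 0" by (simp add: w_def)
        show "\<bar>w y\<bar> \<le> 1" for y
          using bump_nonneg[of x 1 _ y] bump_le_1[of x 1 _ y]
          unfolding w_def minus_bcontfun.rep_eq by (smt (verit))
        show "w y = 0" if "d / 2 \<le> dist y x" for y
          using bump_eq_0[of _ 1 y x] N[OF \<open>N \<le> m\<close>] N[OF \<open>N \<le> n\<close>] that by (simp add: w_def)
        show "\<bar>g y - g x\<bar> \<le> \<epsilon>" if "dist y x < 2 * (d / 2)" for y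
          using d(2)[of y] that by simp
      qed (use d in simp)
      also have "\<dots> < e" using \<open>0 < e\<close> K_pos by (simp add: \<epsilon>_def)
      finally show ?thesis by (simp add: w_def probe_def c.diff_left dist_real_def)
    qed
    then show "\<exists>M. \<forall>m\<ge>M. \<forall>n\<ge>M. dist (probe c g x m) (probe c g x n) < e" by blast
  qed
  then show ?thesis by (simp add: Cauchy_convergent_iff)
qed

lemma probe_tendsto_potential: "probe c g x \<longlonglongrightarrow> potential c g x"
  using convergent_probe unfolding potential_def convergent_LIMSEQ_iff .

lemma potential_approx:
  fixes \<psi> g :: "'a cfun"
  assumes \<psi>1: "\<psi> x = 1" and \<psi>P: "\<And>y. \<bar>\<psi> y\<bar> \<le> P"
    and \<psi>R: "\<And>y. R \<le> dist y x \<Longrightarrow> \<psi> y = 0" and R: "0 < R"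
    and g_osc: "\<And>y. dist y x < 2 * R \<Longrightarrow> \<bar>g y - g x\<bar> \<le> \<epsilon>"
  shows "\<bar>potential c g x - c \<psi> g x\<bar> \<le> (1 + P) * \<epsilon> * K"
proof -
  obtain N where N: "\<And>n. N \<le> n \<Longrightarrow> inverse (real (Suc n)) < R"
    using order_tendstoD(2)[OF LIMSEQ_inverse_real_of_nat R] by (auto simp: eventually_sequentially)
  have "\<bar>probe c g x n - c \<psi> g x\<bar> \<le> (1 + P) * \<epsilon> * K" if "N \<le> n" for n
  proof -
    define w where "w = bump x 1 (inverse (real (Suc n))) - \<psi>"
    have "\<bar>c w g x\<bar> \<le> (1 + P) * \<epsilon> * K"
    proof (rule cocycle_local_bound[OF _ _ _ R g_osc])
      show "w x = 0" by (simp add: w_def \<psi>1)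
      show "\<bar>w y\<bar> \<le> 1 + P" for y
        using \<psi>P[of y] bump_nonneg[of x 1 _ y] bump_le_1[of x 1 _ y]
        unfolding w_def minus_bcontfun.rep_eq by (smt (verit))
      show "w y = 0" if "R \<le> dist y x" for y
        using bump_eq_0[of _ 1 y x] N[OF \<open>N \<le> n\<close>] \<psi>R[OF that] that by (simp add: w_def)
    qed
    then show ?thesis by (simp add: w_def probe_def c.diff_left)
  qed
  then have "\<forall>\<^sub>F n in sequentially. \<bar>probe c g x n - c \<psi> g x\<bar> \<le> (1 + P) * \<epsilon> * K"
    by (auto simp: eventually_sequentially)
  then show ?thesis
    by (intro tendsto_upperbound[OF tendsto_rabs[OF tendsto_diff[OF probe_tendsto_potential tendsto_const]]])
      simp_all
qed

lemma potential_add: "potential c (f + g) x = potential c f x + potential c g x"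
proof -
  have "probe c (f + g) x = (\<lambda>n. probe c f x n + probe c g x n)"
    by (auto simp: probe_def c.add_right)
  then have "probe c (f + g) x \<longlonglongrightarrow> potential c f x + potential c g x"
    by (simp add: tendsto_add probe_tendsto_potential)
  then show ?thesis by (rule LIMSEQ_unique[OF probe_tendsto_potential])
qed

lemma potential_scaleR: "potential c (a *\<^sub>R g) x = a * potential c g x"
proof -
  have "probe c (a *\<^sub>R g) x = (\<lambda>n. a * probe c g x n)"
    by (auto simp: probe_def c.scaleR_right)
  then have "probe c (a *\<^sub>R g) x \<longlonglongrightarrow> a * potential c g x"
    by (simp add: tendsto_mult_left probe_tendsto_potential)
  then show ?thesis by (rule LIMSEQ_unique[OF probe_tendsto_potential])
qed

lemma potential_bound: "\<bar>potential c g x\<bar> \<le> norm g * K"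
proof (rule tendsto_upperbound[OF tendsto_rabs[OF probe_tendsto_potential]])
  have "\<bar>probe c g x n\<bar> \<le> norm g * K" for n
  proof -
    have "\<bar>probe c g x n\<bar> \<le> norm (bump x 1 (inverse (real (Suc n)))) * norm g * K"
      unfolding probe_def by (rule cocycle_apply_bound)
    also have "\<dots> \<le> 1 * norm g * K"
      using norm_bump_le K_pos by (intro mult_right_mono) auto
    finally show ?thesis by simp
  qed
  then show "\<forall>\<^sub>F n in sequentially. \<bar>probe c g x n\<bar> \<le> norm g * K" by simp
qed simp

lemma potential_near_tent_quotient:
  fixes g :: "'a cfun"
  assumes r: "0 < r" and x: "dist x x0 < r / 2"
    and g_osc: "\<And>y. dist y x0 < 5 * r \<Longrightarrow> \<bar>g y - g x0\<bar> \<le> \<epsilon>"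
  shows "\<bar>potential c g x - c (bump x0 1 r) g x / bump x0 1 r x\<bar> \<le> 6 * \<epsilon> * K"
proof -
  define b where "b = bump x0 1 r x"
  define t where "t = dist x x0 / r"
  have "0 \<le> t" "t < 1 / 2" using x r by (simp_all add: t_def field_simps)
  then have b: "1 / 2 \<le> b" by (simp add: b_def flip: t_def)
  define \<psi> where "\<psi> = (1 / b) *\<^sub>R bump x0 1 r"
  have "\<bar>potential c g x - c \<psi> g x\<bar> \<le> (1 + 2) * (2 * \<epsilon>) * K"
  proof (rule potential_approx[where R = "2 * r"])
    show "\<psi> x = 1" using b by (simp add: \<psi>_def del: bump_apply flip: b_def)
    show "\<bar>\<psi> y\<bar> \<le> 2" for y
    proof -
      have "\<bar>bump x0 1 r y\<bar> / b \<le> 1 / (1 / 2)"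
        using b bump_nonneg[of x0 1 r y] bump_le_1[of x0 1 r y] by (intro frac_le) auto
      then show ?thesis using b by (simp add: \<psi>_def abs_mult)
    qed
    show "\<psi> y = 0" if "2 * r \<le> dist y x" for y
    proof -
      have "r \<le> dist y x0" using that r x dist_triangle[of y x x0] dist_commute[of x0 x] by linarith
      then show ?thesis using bump_eq_0[OF r, of 1 y x0] by (simp add: \<psi>_def)
    qed
    show "\<bar>g y - g x\<bar> \<le> 2 * \<epsilon>" if "dist y x < 2 * (2 * r)" for y
    proof -
      have "dist y x0 < 5 * r" using that r x dist_triangle[of y x0 x] by linarith
      moreover have "dist x x0 < 5 * r" using x r by simp
      ultimately show ?thesis using g_osc[of y] g_osc[of x] by linarith
    qed
  qed (use r in simp)
  moreover have "c \<psi> g x = c (bump x0 1 r) g x / b" by (simp add: \<psi>_def c.scaleR_left)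
  ultimately show ?thesis by (simp add: b_def)
qed

lemma isCont_potential: "isCont (potential c g) x0"
  unfolding continuous_at_eps_delta
proof (intro allI impI)
  fix e :: real assume "0 < e"
  define \<epsilon> where "\<epsilon> = e / (12 * K + 2)"
  have \<epsilon>: "0 < \<epsilon>" using \<open>0 < e\<close> K_pos by (simp add: \<epsilon>_def)
  then obtain d where d: "0 < d" "\<And>y. dist y x0 < d \<Longrightarrow> \<bar>g y - g x0\<bar> < \<epsilon>"
    using bcontfun_near by blast
  define r where "r = d / 5"
  have r: "0 < r" using d by (simp add: r_def)
  define h where "h x = c (bump x0 1 r) g x / bump x0 1 r x" for x
  have near: "\<bar>potential c g x - h x\<bar> \<le> 6 * \<epsilon> * K" if "dist x x0 < r / 2" for x
    unfolding h_def using d(2) by (intro potential_near_tent_quotient[OF r that]) (simp add: r_def less_imp_le)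
  have "isCont h x0"
    unfolding h_def by (intro isCont_divide isCont_apply_bcontfun) simp
  then obtain d' where d': "0 < d'" "\<And>x. dist x x0 < d' \<Longrightarrow> \<bar>h x - h x0\<bar> < \<epsilon>"
    unfolding continuous_at_eps_delta dist_real_def using \<epsilon> by blast
  show "\<exists>d>0. \<forall>x. dist x x0 < d \<longrightarrow> dist (potential c g x) (potential c g x0) < e"
  proof (intro exI conjI allI impI)
    show "0 < min d' (r / 2)" using d' r by simp
    fix x assume x: "dist x x0 < min d' (r / 2)"
    have "\<bar>potential c g x - potential c g x0\<bar> < 12 * \<epsilon> * K + \<epsilon>"
      using near[of x] near[of x0] d'(2)[of x] x r by simp
    also have "\<dots> < \<epsilon> * (12 * K + 2)" using \<epsilon> by (simp add: algebra_simps)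
    also have "\<dots> = e" using K_pos by (simp add: \<epsilon>_def)
    finally show "dist (potential c g x) (potential c g x0) < e" by (simp add: dist_real_def)
  qed
qed

text \<open>Write \<phi> f = f x \<phi> + u with u small; the cocycle identity at (\<phi>, f, g) then leaves
  only the error c u g x.\<close>
lemma cocycle_tent_defect:
  fixes f g :: "'a cfun"
  assumes r: "0 < r" and f_osc: "\<And>y. dist y x < r \<Longrightarrow> \<bar>f y - f x\<bar> \<le> \<epsilon>"
  shows "\<bar>c f g x - (f x * c (bump x 1 r) g x - c (bump x 1 r) (bc_mult f g) x
            + c (bump x 1 r) f x * g x)\<bar> \<le> \<epsilon> * norm g * K"
proof -
  define \<phi> where "\<phi> = bump x 1 r"
  define u where "u = bc_mult \<phi> f - f x *\<^sub>R \<phi>"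
  have \<epsilon>: "0 \<le> \<epsilon>" using f_osc[of x] r by simp
  have "c f g x - (f x * c \<phi> g x - c \<phi> (bc_mult f g) x + c \<phi> f x * g x) = c u g x"
    using cocycle_apply[of \<phi> f g x] by (simp add: \<phi>_def u_def c.diff_left c.scaleR_left)
  moreover have "norm u \<le> \<epsilon>"
  proof (rule norm_bound)
    fix y
    have "\<bar>\<phi> y * (f y - f x)\<bar> \<le> \<epsilon>"
    proof (cases "dist y x < r")
      case True
      have "\<bar>\<phi> y\<bar> * \<bar>f y - f x\<bar> \<le> 1 * \<epsilon>"
        using f_osc[OF True] \<epsilon> by (intro mult_mono) (auto simp: \<phi>_def)
      then show ?thesis by (simp add: abs_mult)
    next
      case False
      then show ?thesis using bump_eq_0[OF r, of 1 y x] \<epsilon> by (simp add: \<phi>_def)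
    qed
    then show "norm (u y) \<le> \<epsilon>" by (simp add: u_def algebra_simps)
  qed
  then have "norm u * norm g * K \<le> \<epsilon> * norm g * K"
    using K_pos by (intro mult_right_mono) auto
  ultimately show ?thesis using cocycle_apply_bound[of u g x] by (simp add: \<phi>_def)
qed

lemma cocycle_eq_potential_coboundary:
  "c f g x = f x * potential c g x - potential c (bc_mult f g) x + potential c f x * g x"
proof -
  define E where "E n = f x * probe c g x n - probe c (bc_mult f g) x n + probe c f x n * g x" for n
  have "E \<longlonglongrightarrow> f x * potential c g x - potential c (bc_mult f g) x + potential c f x * g x"
    unfolding E_def by (intro tendsto_intros probe_tendsto_potential)
  moreover have "E \<longlonglongrightarrow> c f g x"
  proof (rule LIMSEQ_I)
    fix e :: real assume "0 < e"
    define \<epsilon> where "\<epsilon> = e / (norm g * K + 1)"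
    have gK: "0 \<le> norm g * K" using K_pos by simp
    have "0 < \<epsilon>" using \<open>0 < e\<close> gK by (simp add: \<epsilon>_def)
    then obtain d where d: "0 < d" "\<And>y. dist y x < d \<Longrightarrow> \<bar>f y - f x\<bar> < \<epsilon>"
      using bcontfun_near by blast
    then obtain N where N: "\<And>n. N \<le> n \<Longrightarrow> inverse (real (Suc n)) < d"
      using order_tendstoD(2)[OF LIMSEQ_inverse_real_of_nat, of d] by (auto simp: eventually_sequentially)
    have "norm (E n - c f g x) < e" if "N \<le> n" for n
    proof -
      have "norm (E n - c f g x) \<le> \<epsilon> * (norm g * K)"
        using cocycle_tent_defect[of "inverse (real (Suc n))" x f \<epsilon> g] d(2) N[OF that]
        by (simp add: E_def probe_def abs_minus_commute mult.assoc less_imp_le)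
      also have "\<dots> < e" using \<open>0 < e\<close> gK by (simp add: \<epsilon>_def field_simps)
      finally show ?thesis .
    qed
    then show "\<exists>N. \<forall>n\<ge>N. norm (E n - c f g x) < e" by blast
  qed
  ultimately show ?thesis using LIMSEQ_unique by metis
qed

lemma potential_in_bcontfun: "potential c g \<in> bcontfun"
  using isCont_potential potential_bound
  by (intro bcontfun_normI continuous_at_imp_continuous_on) auto

lemma cocycle_is_coboundary: "\<exists>S. bounded_linear S \<and> c = hochschild_coboundary S"
proof (intro exI conjI)
  define S where "S g = Bcontfun (potential c g)" for g
  have S_apply: "S g x = potential c g x" for g x
    by (simp add: S_def Bcontfun_inverse[OF potential_in_bcontfun])
  show "bounded_linear S"
  proof (rule bounded_linear_intro[where K = K])
    show "S (f + g) = S f + S g" for f g by (rule bcontfun_eqI) (simp add: S_apply potential_add)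
    show "S (a *\<^sub>R g) = a *\<^sub>R S g" for a g by (rule bcontfun_eqI) (simp add: S_apply potential_scaleR)
    show "norm (S g) \<le> norm g * K" for g by (rule norm_bound) (simp add: S_apply potential_bound)
  qed
  show "c = hochschild_coboundary S"
    by (intro ext bcontfun_eqI)
      (simp add: hochschild_coboundary_def S_apply cocycle_eq_potential_coboundary)
qed

end

lemma bounded_hochschild_cocycle_is_coboundary:
  fixes c :: "'a::metric_space cfun \<Rightarrow> 'a cfun \<Rightarrow> 'a cfun"
  assumes "bounded_bilinear c" and "hochschild_cocycle c"
  shows "\<exists>S. bounded_linear S \<and> c = hochschild_coboundary S"
proof -
  obtain K where "0 < K" "\<And>f g. norm (c f g) \<le> norm f * norm g * K"
    using bounded_bilinear.pos_bounded[OF assms(1)] by blast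
  then show ?thesis using cocycle_is_coboundary assms by blast
qed

lemma fstar_cong:
  "(\<And>j. j \<le> n \<Longrightarrow> X j = X' j) \<Longrightarrow> (\<And>j. j \<le> n \<Longrightarrow> Y j = Y' j) \<Longrightarrow> fstar c X Y n = fstar c X' Y' n"
  unfolding fstar_def by (intro sum.cong refl) auto

context
  fixes c :: "nat \<Rightarrow> 'a::topological_space cfun \<Rightarrow> 'a cfun \<Rightarrow> 'a cfun"
  assumes bilinear: "\<And>i. bounded_bilinear (c i)"
begin

lemma fstar_add_left: "fstar c (\<lambda>j. X j + Y j) Z n = fstar c X Z n + fstar c Y Z n"
  unfolding fstar_def by (simp add: bounded_bilinear.add_left[OF bilinear] sum.distrib)

lemma fstar_add_right: "fstar c Z (\<lambda>j. X j + Y j) n = fstar c Z X n + fstar c Z Y n"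
  unfolding fstar_def by (simp add: bounded_bilinear.add_right[OF bilinear] sum.distrib)

lemma fstar_monom_left: "fstar c ((\<lambda>_. 0)(n := u)) Y n = c 0 u (Y 0)"
proof -
  have "fstar c ((\<lambda>_. 0)(n := u)) Y n = (\<Sum>i\<le>n. \<Sum>j\<le>n - i. if j = n then c i u (Y (n - i - j)) else 0)"
    unfolding fstar_def by (intro sum.cong refl) (simp add: bounded_bilinear.zero_left[OF bilinear])
  also have "\<dots> = (\<Sum>i\<le>n. if i = 0 then c i u (Y (n - i - n)) else 0)"
    by (intro sum.cong refl) (auto simp: sum.delta)
  finally show ?thesis by (simp add: sum.delta)
qed

lemma fstar_monom_right: "fstar c X ((\<lambda>_. 0)(n := u)) n = c 0 (X 0) u"
proof -
  have "fstar c X ((\<lambda>_. 0)(n := u)) n = (\<Sum>i\<le>n. \<Sum>j\<le>n - i. if j = 0 \<and> i = 0 then c i (X j) u else 0)"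
    unfolding fstar_def by (intro sum.cong refl) (auto simp: bounded_bilinear.zero_right[OF bilinear])
  also have "\<dots> = (\<Sum>i\<le>n. if i = 0 then c i (X 0) u else 0)"
    by (intro sum.cong refl) (auto simp: sum.delta)
  finally show ?thesis by (simp add: sum.delta)
qed

lemma fstar_top_coeff:
  assumes "0 < n" and "\<And>j. j < n \<Longrightarrow> X j = X' j" and "\<And>j. j < n \<Longrightarrow> Y j = Y' j"
    and "X' n = 0" and "Y' n = 0"
  shows "fstar c X Y n = fstar c X' Y' n + c 0 (X n) (Y 0) + c 0 (X 0) (Y n)"
proof -
  let ?X\<^sub>0 = "X(n := 0)" and ?X\<^sub>n = "(\<lambda>_. 0)(n := X n)"
    and ?Y\<^sub>0 = "Y(n := 0)" and ?Y\<^sub>n = "(\<lambda>_. 0)(n := Y n)"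
  have "fstar c X Y n = fstar c (\<lambda>j. ?X\<^sub>0 j + ?X\<^sub>n j) (\<lambda>j. ?Y\<^sub>0 j + ?Y\<^sub>n j) n"
    by (intro fstar_cong) auto
  also have "\<dots> = fstar c ?X\<^sub>0 ?Y\<^sub>0 n + fstar c ?X\<^sub>0 ?Y\<^sub>n n + (fstar c ?X\<^sub>n ?Y\<^sub>0 n + fstar c ?X\<^sub>n ?Y\<^sub>n n)"
    by (simp only: fstar_add_left fstar_add_right)
  also have "\<dots> = fstar c X' Y' n + c 0 (X 0) (Y n) + (c 0 (X n) (Y 0) + c 0 0 (Y n))"
  proof -
    have "?X\<^sub>0 0 = X 0" "?Y\<^sub>0 0 = Y 0" "?X\<^sub>n 0 = 0" using \<open>0 < n\<close> by simp_all
    moreover have "fstar c ?X\<^sub>0 ?Y\<^sub>0 n = fstar c X' Y' n"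
      using assms(2-5) by (intro fstar_cong) (auto simp: le_less)
    ultimately show ?thesis by (simp only: fstar_monom_left fstar_monom_right)
  qed
  also have "c 0 0 (Y n) = 0" by (rule bounded_bilinear.zero_left[OF bilinear])
  finally show ?thesis by (simp add: ac_simps)
qed

end

section \<open>Trivialization degree by degree\<close>

definition obstruction ::
    "(nat \<Rightarrow> 'a::topological_space cfun \<Rightarrow> 'a cfun \<Rightarrow> 'a cfun)
      \<Rightarrow> (nat \<Rightarrow> 'a cfun \<Rightarrow> 'a cfun) \<Rightarrow> nat \<Rightarrow> 'a cfun \<Rightarrow> 'a cfun \<Rightarrow> 'a cfun"
  where "obstruction c T n = (\<lambda>f g. fstar c (\<lambda>j. (T(n := (\<lambda>_. 0))) j f) (\<lambda>j. (T(n := (\<lambda>_. 0))) j g) n)"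

definition trivialization_upto ::
    "(nat \<Rightarrow> 'a::topological_space cfun \<Rightarrow> 'a cfun \<Rightarrow> 'a cfun)
      \<Rightarrow> nat \<Rightarrow> (nat \<Rightarrow> 'a cfun \<Rightarrow> 'a cfun) \<Rightarrow> bool"
  where "trivialization_upto c n T \<longleftrightarrow> T 0 = id \<and> (\<forall>j\<le>n. bounded_linear (T j)) \<and>
    (\<forall>m\<le>n. \<forall>f g. fstar c (\<lambda>j. T j f) (\<lambda>j. T j g) m = T m (bc_mult f g))"

lemma trivialization_upto_cong:
  assumes "\<And>j. j \<le> n \<Longrightarrow> T j = T' j"
  shows "trivialization_upto c n T \<longleftrightarrow> trivialization_upto c n T'"
proof -
  have "fstar c (\<lambda>j. T j f) (\<lambda>j. T j g) m = fstar c (\<lambda>j. T' j f) (\<lambda>j. T' j g) m" if "m \<le> n" for m f g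
    using that assms by (intro fstar_cong) auto
  then show ?thesis
    unfolding trivialization_upto_def using assms by (metis le0)
qed

lemma trivialization_upto_Suc_iff:
  "trivialization_upto c (Suc n) T \<longleftrightarrow> trivialization_upto c n T \<and> bounded_linear (T (Suc n)) \<and>
    (\<forall>f g. fstar c (\<lambda>j. T j f) (\<lambda>j. T j g) (Suc n) = T (Suc n) (bc_mult f g))"
  unfolding trivialization_upto_def by (auto simp: le_Suc_eq)

lemma trivialization_upto_0:
  assumes "\<And>f g. c 0 f g = bc_mult f g"
  shows "trivialization_upto c 0 (\<lambda>_. id)"
  using assms by (simp add: trivialization_upto_def fstar_def id_def)

lemma trivialization_exists:
  assumes "trivialization_upto c 0 T\<^sub>0"
    and step: "\<And>n T. trivialization_upto c n T \<Longrightarrow> \<exists>S. trivialization_upto c (Suc n) (T(Suc n := S))"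
  shows "\<exists>T. \<forall>n. trivialization_upto c n T"
proof -
  have "\<exists>T'. trivialization_upto c (Suc n) T' \<and> (\<forall>j\<le>n. T' j = T j)" if "trivialization_upto c n T" for n T
    using step[OF that] by force
  then obtain F where F: "\<And>n. trivialization_upto c n (F n)" "\<And>n j. j \<le> n \<Longrightarrow> F (Suc n) j = F n j"
    using dependent_nat_choice[of "trivialization_upto c" "\<lambda>n T T'. \<forall>j\<le>n. T' j = T j"] assms(1) by metis
  have stable: "F n j = F j j" if "j \<le> n" for j n
    using that by (induction n rule: dec_induct) (auto simp: F(2))
  have "trivialization_upto c n (\<lambda>j. F j j) \<longleftrightarrow> trivialization_upto c n (F n)" for n
    by (intro trivialization_upto_cong) (metis stable)
  then have "trivialization_upto c n (\<lambda>j. F j j)" for n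
    using F(1) by blast
  then show ?thesis by blast
qed

lemma bounded_bilinear_obstruction:
  assumes "\<And>i. bounded_bilinear (c i)" and "\<And>j. j < n \<Longrightarrow> bounded_linear (T j)"
  shows "bounded_bilinear (obstruction c T n)"
proof -
  have "bounded_linear ((T(n := (\<lambda>_. 0))) j)" if "j \<le> n" for j
    using assms(2)[of j] that by (cases "j = n") auto
  then show ?thesis
    unfolding obstruction_def fstar_def
    by (intro bounded_bilinear_sum bounded_bilinear.comp[OF assms(1)]) auto
qed

lemma fstar_update_eq_obstruction:
  assumes "\<And>i. bounded_bilinear (c i)" and "\<And>f g. c 0 f g = bc_mult f g"
    and "0 < n" and "T 0 = id"
  shows "fstar c (\<lambda>j. (T(n := S)) j f) (\<lambda>j. (T(n := S)) j g) n
    = obstruction c T n f g + bc_mult (S f) g + bc_mult f (S g)"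
proof -
  have "fstar c (\<lambda>j. (T(n := S)) j f) (\<lambda>j. (T(n := S)) j g) n
      = obstruction c T n f g + c 0 ((T(n := S)) n f) ((T(n := S)) 0 g)
        + c 0 ((T(n := S)) 0 f) ((T(n := S)) n g)"
    unfolding obstruction_def by (rule fstar_top_coeff[OF assms(1,3)]) simp_all
  then show ?thesis using assms(2-4) by simp
qed

lemma fstar_truncation_below:
  assumes "trivialization_upto c n T" and "j \<le> n"
  shows "fstar c (\<lambda>j. (T(Suc n := S)) j f) (\<lambda>j. (T(Suc n := S)) j g) j = (T(Suc n := S)) j (bc_mult f g)"
proof -
  have "trivialization_upto c n (T(Suc n := S))"
    using assms(1) trivialization_upto_cong[of n "T(Suc n := S)" T] by simp
  then show ?thesis using assms(2) by (simp add: trivialization_upto_def)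
qed

lemma obstruction_mult_left:
  assumes bilinear: "\<And>i. bounded_bilinear (c i)" and c0: "\<And>f g. c 0 f g = bc_mult f g"
    and triv: "trivialization_upto c n T"
  defines "T' \<equiv> T(Suc n := (\<lambda>_. 0))"
  shows "fstar c (fstar c (\<lambda>j. T' j f) (\<lambda>j. T' j g)) (\<lambda>j. T' j h) (Suc n)
    = obstruction c T (Suc n) (bc_mult f g) h + bc_mult (obstruction c T (Suc n) f g) h"
proof -
  have "fstar c (fstar c (\<lambda>j. T' j f) (\<lambda>j. T' j g)) (\<lambda>j. T' j h) (Suc n)
      = fstar c (\<lambda>j. T' j (bc_mult f g)) (\<lambda>j. T' j h) (Suc n)
        + c 0 (fstar c (\<lambda>j. T' j f) (\<lambda>j. T' j g) (Suc n)) (T' 0 h)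
        + c 0 (fstar c (\<lambda>j. T' j f) (\<lambda>j. T' j g) 0) (T' (Suc n) h)"
    using fstar_truncation_below[OF triv] unfolding T'_def
    by (intro fstar_top_coeff[OF bilinear]) simp_all
  then show ?thesis using triv
    by (simp add: obstruction_def T'_def c0 trivialization_upto_def
        bounded_bilinear.zero_right[OF bounded_bilinear_bc_mult])
qed

lemma obstruction_mult_right:
  assumes bilinear: "\<And>i. bounded_bilinear (c i)" and c0: "\<And>f g. c 0 f g = bc_mult f g"
    and triv: "trivialization_upto c n T"
  defines "T' \<equiv> T(Suc n := (\<lambda>_. 0))"
  shows "fstar c (\<lambda>j. T' j f) (fstar c (\<lambda>j. T' j g) (\<lambda>j. T' j h)) (Suc n)
    = obstruction c T (Suc n) f (bc_mult g h) + bc_mult f (obstruction c T (Suc n) g h)"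
proof -
  have "fstar c (\<lambda>j. T' j f) (fstar c (\<lambda>j. T' j g) (\<lambda>j. T' j h)) (Suc n)
      = fstar c (\<lambda>j. T' j f) (\<lambda>j. T' j (bc_mult g h)) (Suc n)
        + c 0 (T' (Suc n) f) (fstar c (\<lambda>j. T' j g) (\<lambda>j. T' j h) 0)
        + c 0 (T' 0 f) (fstar c (\<lambda>j. T' j g) (\<lambda>j. T' j h) (Suc n))"
    using fstar_truncation_below[OF triv] unfolding T'_def
    by (intro fstar_top_coeff[OF bilinear]) simp_all
  then show ?thesis using triv
    by (simp add: obstruction_def T'_def c0 trivialization_upto_def
        bounded_bilinear.zero_left[OF bounded_bilinear_bc_mult])
qed

lemma hochschild_cocycle_obstruction:
  assumes "\<And>i. bounded_bilinear (c i)" and "\<And>f g. c 0 f g = bc_mult f g"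
    and assoc: "\<And>F G H. fstar c (fstar c F G) H = fstar c F (fstar c G H)"
    and "trivialization_upto c n T"
  shows "hochschild_cocycle (obstruction c T (Suc n))"
  unfolding hochschild_cocycle_def
  using obstruction_mult_left[OF assms(1,2,4)] obstruction_mult_right[OF assms(1,2,4)] assoc by metis

lemma trivialization_upto_Suc:
  fixes c :: "nat \<Rightarrow> 'a::metric_space cfun \<Rightarrow> 'a cfun \<Rightarrow> 'a cfun"
  assumes bilinear: "\<And>i. bounded_bilinear (c i)" and c0: "\<And>f g. c 0 f g = bc_mult f g"
    and assoc: "\<And>F G H. fstar c (fstar c F G) H = fstar c F (fstar c G H)"
    and triv: "trivialization_upto c n T"
  shows "\<exists>S. trivialization_upto c (Suc n) (T(Suc n := S))"
proof -
  have "bounded_bilinear (obstruction c T (Suc n))"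
    using triv by (intro bounded_bilinear_obstruction[OF bilinear]) (simp add: trivialization_upto_def)
  then obtain S\<^sub>0 where S\<^sub>0: "bounded_linear S\<^sub>0" "obstruction c T (Suc n) = hochschild_coboundary S\<^sub>0"
    using bounded_hochschild_cocycle_is_coboundary hochschild_cocycle_obstruction[OF assms] by blast
  define S where "S f = - S\<^sub>0 f" for f
  have "fstar c (\<lambda>j. (T(Suc n := S)) j f) (\<lambda>j. (T(Suc n := S)) j g) (Suc n) = S (bc_mult f g)" for f g
  proof -
    have "fstar c (\<lambda>j. (T(Suc n := S)) j f) (\<lambda>j. (T(Suc n := S)) j g) (Suc n)
        = obstruction c T (Suc n) f g + bc_mult (S f) g + bc_mult f (S g)"
      using triv by (intro fstar_update_eq_obstruction[where c = c, OF bilinear c0])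
        (simp_all add: trivialization_upto_def)
    also have "\<dots> = S (bc_mult f g)"
      by (rule bcontfun_eqI) (simp add: S\<^sub>0(2) hochschild_coboundary_def S_def algebra_simps)
    finally show ?thesis .
  qed
  moreover have "trivialization_upto c n (T(Suc n := S))"
    using triv trivialization_upto_cong[of n "T(Suc n := S)" T] by simp
  moreover have "bounded_linear S"
    unfolding S_def by (rule bounded_linear_minus[OF S\<^sub>0(1)])
  ultimately show ?thesis
    by (auto simp: trivialization_upto_Suc_iff)
qed

theorem mainTheorem16:
  fixes c :: "nat \<Rightarrow> ('a::metric_space \<Rightarrow>\<^sub>C real) \<Rightarrow> ('a \<Rightarrow>\<^sub>C real) \<Rightarrow> ('a \<Rightarrow>\<^sub>C real)"
  assumes compact_M: "compact (UNIV :: 'a set)"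
    and c0: "\<And>f g. c 0 f g = bc_mult f g"
    and c_cont: "\<And>k. k \<ge> 1 \<Longrightarrow>
        \<exists>L :: (('a \<times> 'a) \<Rightarrow>\<^sub>C real) \<Rightarrow> ('a \<Rightarrow>\<^sub>C real).
          bounded_linear L \<and> (\<forall>f g. c k f g = L (bc_tensor f g))"
    and assoc: "\<And>F G H. fstar c (fstar c F G) H = fstar c F (fstar c G H)"
  shows "\<exists>T :: nat \<Rightarrow> ('a \<Rightarrow>\<^sub>C real) \<Rightarrow> ('a \<Rightarrow>\<^sub>C real).
           T 0 = id \<and> (\<forall>k\<ge>1. bounded_linear (T k)) \<and>
           (\<forall>f g. fstar c (\<lambda>n. T n f) (\<lambda>n. T n g) = (\<lambda>n. T n (bc_mult f g)))"
proof -
  have bilinear: "bounded_bilinear (c k)" for k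
  proof (cases "k = 0")
    case True
    then have "c k = bc_mult" using c0 by (intro ext) simp
    then show ?thesis using bounded_bilinear_bc_mult by simp
  next
    case False
    then obtain L where "bounded_linear L" and "c k = (\<lambda>f g. L (bc_tensor f g))"
      using c_cont[of k] by fastforce
    then show ?thesis using bounded_linear_compose_bilinear bounded_bilinear_bc_tensor by metis
  qed
  obtain T where T: "\<And>n. trivialization_upto c n T"
    using trivialization_exists[OF trivialization_upto_0[where c = c, OF c0]
        trivialization_upto_Suc[where c = c, OF bilinear c0 assoc]]
    by blast
  show ?thesis
  proof (intro exI conjI allI impI)
    show "T 0 = id" using T[of 0] by (simp add: trivialization_upto_def)
    show "bounded_linear (T k)" for k using T[of k] by (simp add: trivialization_upto_def)
    show "fstar c (\<lambda>n. T n f) (\<lambda>n. T n g) = (\<lambda>n. T n (bc_mult f g))" for f g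
    proof
      show "fstar c (\<lambda>n. T n f) (\<lambda>n. T n g) n = T n (bc_mult f g)" for n
        using T[of n] by (simp add: trivialization_upto_def)
    qed
  qed
qed

end
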